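(* Let $n\ge2$, $\beta_i>0$, $\nu_i\in[0,1]$ and $\rho_i\in[0,1]$ for $i\in\{1,\dots,n\}$, and consider the well-mixed resource–consumption system \[ \dot x=(1-x)x-x\sum_{i=1}^n y_i,\qquad \dot y_i=\beta_i\Big((1-\nu_i)(x-\rho_i)+\frac{\nu_i}{n-1}\sum_{j\ne i}(y_j-y_i)\Big),\quad i=1,\dots,n . \] Assume that it is not the case that all $\nu_i=1$, not the case that all $\nu_i=0$, not the case that all $\rho_i=1$, and not the case that all $\rho_i=0$. Then, provided at most one of $\nu_1,\dots,\nu_n$ equals $0$ (i.e. at least $n-1$ consumers have $\nu_i>0$), the system has a unique equilibrium $(\bar x,\bar y_1,\dots,\bar y_n)$ satisfying $\bar x=1-\sum_{i=1}^n\bar y_i$; and such an equilibrium exists (uniquely) only if at least $n-1$ of the $\nu_i$ are positive.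
   Context: An equilibrium is a point $(\bar x,\bar y_1,\dots,\bar y_n)\in\mathbb{R}^{n+1}$ at which all right-hand sides vanish. *)

theory Defs
  imports Main "HOL-Library.Cardinality" Complex_Main
begin

text \<open>Consumers are indexed by a finite type 'n with n = CARD('n).
  Right-hand side of the resource equation.\<close>
definition rc_rhs_x :: "real \<Rightarrow> ('n::finite \<Rightarrow> real) \<Rightarrow> real" where
  "rc_rhs_x x y = (1 - x) * x - x * (\<Sum>i\<in>UNIV. y i)"

definition rc_rhs_y :: "('n::finite \<Rightarrow> real) \<Rightarrow> ('n \<Rightarrow> real) \<Rightarrow> ('n \<Rightarrow> real)
    \<Rightarrow> real \<Rightarrow> ('n \<Rightarrow> real) \<Rightarrow> 'n \<Rightarrow> real" where
  "rc_rhs_y \<beta> \<nu> \<rho> x y i =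
     \<beta> i * ((1 - \<nu> i) * (x - \<rho> i)
        + \<nu> i / (real CARD('n) - 1) * (\<Sum>j\<in>UNIV - {i}. (y j - y i)))"

definition rc_equilibrium :: "('n::finite \<Rightarrow> real) \<Rightarrow> ('n \<Rightarrow> real) \<Rightarrow> ('n \<Rightarrow> real)
    \<Rightarrow> real \<Rightarrow> ('n \<Rightarrow> real) \<Rightarrow> bool" where
  "rc_equilibrium \<beta> \<nu> \<rho> x y \<longleftrightarrow>
     rc_rhs_x x y = 0 \<and> (\<forall>i. rc_rhs_y \<beta> \<nu> \<rho> x y i = 0)"

end

theory Submission
  imports Defs
begin

text \<open>On the hyperplane \<open>x = 1 - S\<close>, \<open>S = \<Sum>i. y\<^sub>i\<close>, the resource equation holds automatically and,
  after multiplying by \<open>(n - 1) / \<beta>\<^sub>i\<close>, consumer \<open>i\<close> only sees \<open>S\<close> and its own \<open>y\<^sub>i\<close>.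
  A consumer with \<open>\<nu>\<^sub>i > 0\<close> then fixes \<open>y\<^sub>i\<close> as an affine function of \<open>S\<close>, while a consumer
  with \<open>\<nu>\<^sub>i = 0\<close> fixes \<open>S = 1 - \<rho>\<^sub>i\<close> and leaves \<open>y\<^sub>i\<close> free. If every \<open>\<nu>\<^sub>i > 0\<close>, summing the
  affine laws gives a linear equation for \<open>S\<close> whose slope is positive because some \<open>\<nu>\<^sub>i < 1\<close>;
  if exactly one \<open>\<nu>\<^sub>k = 0\<close>, \<open>S\<close> is fixed and \<open>y\<^sub>k\<close> is recovered from the sum; if two
  consumers have \<open>\<nu> = 0\<close>, mass can be shifted between them without leaving the equilibrium set.\<close>

lemma ex1_graph_iff:
  "(\<exists>!p. fst p = f (snd p) \<and> Q (snd p)) \<longleftrightarrow> (\<exists>!y. Q y)"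
proof
  assume "\<exists>!p. fst p = f (snd p) \<and> Q (snd p)"
  then obtain p where p: "Q (snd p)"
    and uniq: "\<And>q. fst q = f (snd q) \<and> Q (snd q) \<Longrightarrow> q = p" by blast
  show "\<exists>!y. Q y"
  proof (rule ex1I[of _ "snd p"])
    show "Q (snd p)" by (fact p)
  next
    fix y assume "Q y"
    then have "(f y, y) = p" using uniq by simp
    then show "y = snd p" by auto
  qed
next
  assume "\<exists>!y. Q y"
  then show "\<exists>!p. fst p = f (snd p) \<and> Q (snd p)"
    by (metis fst_conv snd_conv prod.collapse)
qed

lemma ex1_fixed_point_of_sum:
  fixes h :: "'a::comm_monoid_add \<Rightarrow> 'n::finite \<Rightarrow> 'a"
  assumes "\<exists>!S. sum (h S) UNIV = S"
  shows "\<exists>!y. y = h (sum y UNIV)"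
proof -
  from assms obtain S where S: "sum (h S) UNIV = S"
    and uniq: "\<And>T. sum (h T) UNIV = T \<Longrightarrow> T = S" by blast
  show ?thesis
  proof (rule ex1I[of _ "h S"])
    show "h S = h (sum (h S) UNIV)" using S by simp
  next
    fix y assume y: "y = h (sum y UNIV)"
    then have "sum (h (sum y UNIV)) UNIV = sum y UNIV" by simp
    then show "y = h S" using y uniq by metis
  qed
qed

lemma ex1_fun_with_sum_and_values_off:
  fixes g :: "'n::finite \<Rightarrow> 'a::ab_group_add"
  shows "\<exists>!y. sum y UNIV = S \<and> (\<forall>i. i \<noteq> k \<longrightarrow> y i = g i)"
proof (rule ex1I[of _ "g(k := S - sum g (UNIV - {k}))"])
  have "sum (g(k := S - sum g (UNIV - {k}))) (UNIV - {k}) = sum g (UNIV - {k})"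
    by (rule sum.cong) auto
  then show "sum (g(k := S - sum g (UNIV - {k}))) UNIV = S
      \<and> (\<forall>i. i \<noteq> k \<longrightarrow> (g(k := S - sum g (UNIV - {k}))) i = g i)"
    by (simp add: sum.remove[of UNIV k])
next
  fix y assume y: "sum y UNIV = S \<and> (\<forall>i. i \<noteq> k \<longrightarrow> y i = g i)"
  then have "sum y (UNIV - {k}) = sum g (UNIV - {k})" by (intro sum.cong) auto
  moreover have "sum y UNIV = y k + sum y (UNIV - {k})" by (simp add: sum.remove)
  ultimately show "y = g(k := S - sum g (UNIV - {k}))" using y by (auto intro!: ext)
qed

lemma sum_diff_singleton_differences:
  fixes y :: "'n::finite \<Rightarrow> real"
  shows "(\<Sum>j\<in>UNIV - {i}. y j - y i) = sum y UNIV - real CARD('n) * y i"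
proof -
  have "(\<Sum>j\<in>UNIV - {i}. y j - y i)
      = sum y (UNIV - {i}) - real (card (UNIV - {i} :: 'n set)) * y i"
    by (simp add: sum_subtractf)
  also have "sum y (UNIV - {i}) = sum y UNIV - y i" by (simp add: sum_diff1)
  also have "real (card (UNIV - {i} :: 'n set)) = real CARD('n) - 1"
    using finite_UNIV_card_ge_0[where 'a='n] by (simp add: card_Diff_singleton of_nat_diff)
  finally show ?thesis by (simp add: algebra_simps)
qed

text \<open>Consumer \<open>i\<close>'s equation at total consumption \<open>S\<close> and own level \<open>t\<close>, scaled by \<open>(n - 1) / \<beta>\<^sub>i\<close>.\<close>
definition hyperplane_residual :: "('n::finite \<Rightarrow> real) \<Rightarrow> ('n \<Rightarrow> real) \<Rightarrow> real \<Rightarrow> real \<Rightarrow> 'n \<Rightarrow> real"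
  where "hyperplane_residual \<nu> \<rho> S t i =
    (1 - \<nu> i) * (1 - S - \<rho> i) * (real CARD('n) - 1) + \<nu> i * (S - real CARD('n) * t)"

definition hyperplane_equilibrium :: "('n::finite \<Rightarrow> real) \<Rightarrow> ('n \<Rightarrow> real) \<Rightarrow> ('n \<Rightarrow> real) \<Rightarrow> bool"
  where "hyperplane_equilibrium \<nu> \<rho> y \<longleftrightarrow> (\<forall>i. hyperplane_residual \<nu> \<rho> (sum y UNIV) (y i) i = 0)"

text \<open>Junk (zero) when \<open>\<nu>\<^sub>i = 0\<close>; only used for consumers with \<open>\<nu>\<^sub>i \<noteq> 0\<close>.\<close>
definition level_slope :: "('n::finite \<Rightarrow> real) \<Rightarrow> 'n \<Rightarrow> real"
  where "level_slope \<nu> i = (real CARD('n) - 1) * (1 - \<nu> i) / \<nu> i"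

definition consumer_level :: "('n::finite \<Rightarrow> real) \<Rightarrow> ('n \<Rightarrow> real) \<Rightarrow> real \<Rightarrow> 'n \<Rightarrow> real"
  where "consumer_level \<nu> \<rho> S i = (S + level_slope \<nu> i * (1 - S - \<rho> i)) / real CARD('n)"

lemma rc_equilibrium_on_hyperplane_iff:
  fixes \<beta> \<nu> \<rho> y :: "'n::finite \<Rightarrow> real"
  assumes "CARD('n) \<ge> 2" and "\<forall>i. \<beta> i \<noteq> 0"
  shows "rc_equilibrium \<beta> \<nu> \<rho> (1 - sum y UNIV) y \<longleftrightarrow> hyperplane_equilibrium \<nu> \<rho> y"
proof -
  have n1: "real CARD('n) - 1 > 0" using assms(1) by simp
  have "rc_rhs_x (1 - sum y UNIV) y = 0" by (simp add: rc_rhs_x_def algebra_simps)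
  moreover have "rc_rhs_y \<beta> \<nu> \<rho> (1 - sum y UNIV) y i
      = \<beta> i * hyperplane_residual \<nu> \<rho> (sum y UNIV) (y i) i / (real CARD('n) - 1)" for i
    using n1 by (simp add: rc_rhs_y_def hyperplane_residual_def sum_diff_singleton_differences
        field_simps)
  ultimately show ?thesis
    using assms(2) n1 by (simp add: rc_equilibrium_def hyperplane_equilibrium_def)
qed

lemma ex1_rc_equilibrium_on_hyperplane_iff:
  fixes \<beta> \<nu> \<rho> :: "'n::finite \<Rightarrow> real"
  assumes "CARD('n) \<ge> 2" and "\<forall>i. \<beta> i \<noteq> 0"
  shows "(\<exists>!p :: real \<times> ('n \<Rightarrow> real).
            rc_equilibrium \<beta> \<nu> \<rho> (fst p) (snd p) \<and> fst p = 1 - (\<Sum>i\<in>UNIV. snd p i))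
    \<longleftrightarrow> (\<exists>!y. hyperplane_equilibrium \<nu> \<rho> y)"
proof -
  have "rc_equilibrium \<beta> \<nu> \<rho> (fst p) (snd p) \<and> fst p = 1 - (\<Sum>i\<in>UNIV. snd p i)
    \<longleftrightarrow> fst p = 1 - sum (snd p) UNIV \<and> hyperplane_equilibrium \<nu> \<rho> (snd p)"
    for p :: "real \<times> ('n \<Rightarrow> real)"
    using rc_equilibrium_on_hyperplane_iff[OF assms] by auto
  then show ?thesis using ex1_graph_iff[of "\<lambda>y. 1 - sum y UNIV"] by simp
qed

lemma hyperplane_residual_eq_0_iff_level:
  assumes "\<nu> i \<noteq> 0"
  shows "hyperplane_residual \<nu> \<rho> S t i = 0 \<longleftrightarrow> t = consumer_level \<nu> \<rho> S i"
  using assms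
  by (auto simp: hyperplane_residual_def consumer_level_def level_slope_def field_simps)

lemma hyperplane_residual_eq_0_iff_unweighted:
  fixes \<nu> :: "'n::finite \<Rightarrow> real"
  assumes "CARD('n) \<ge> 2" and "\<nu> i = 0"
  shows "hyperplane_residual \<nu> \<rho> S t i = 0 \<longleftrightarrow> S = 1 - \<rho> i"
  using assms by (auto simp: hyperplane_residual_def)

lemma sum_consumer_level:
  fixes \<nu> \<rho> :: "'n::finite \<Rightarrow> real"
  shows "(\<Sum>i\<in>UNIV. consumer_level \<nu> \<rho> S i)
    = S + ((\<Sum>i\<in>UNIV. level_slope \<nu> i * (1 - \<rho> i)) - S * sum (level_slope \<nu>) UNIV)
          / real CARD('n)"
proof -
  have "(\<Sum>i\<in>UNIV. consumer_level \<nu> \<rho> S i)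
      = (\<Sum>i\<in>UNIV. S + level_slope \<nu> i * (1 - S - \<rho> i)) / real CARD('n)"
    unfolding consumer_level_def by (rule sum_divide_distrib[symmetric])
  also have "(\<Sum>i\<in>UNIV. S + level_slope \<nu> i * (1 - S - \<rho> i))
      = (\<Sum>i\<in>UNIV. S + (level_slope \<nu> i * (1 - \<rho> i) - S * level_slope \<nu> i))"
    by (rule sum.cong) (simp_all add: algebra_simps)
  also have "\<dots> = real CARD('n) * S
      + ((\<Sum>i\<in>UNIV. level_slope \<nu> i * (1 - \<rho> i)) - S * sum (level_slope \<nu>) UNIV)"
    by (simp add: sum.distrib sum_subtractf sum_distrib_left)
  finally show ?thesis by (simp add: add_divide_distrib)
qed

lemma ex1_hyperplane_equilibrium_all_weighted:
  fixes \<nu> \<rho> :: "'n::finite \<Rightarrow> real"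
  assumes "CARD('n) \<ge> 2" and "\<forall>i. \<nu> i \<in> {0<..1}" and "\<nu> j < 1"
  shows "\<exists>!y. hyperplane_equilibrium \<nu> \<rho> y"
proof -
  define A where "A = sum (level_slope \<nu>) UNIV"
  define B where "B = (\<Sum>i\<in>UNIV. level_slope \<nu> i * (1 - \<rho> i))"
  have "level_slope \<nu> i \<ge> 0" for i
    using assms(1) assms(2)[rule_format, of i]
    by (auto simp: level_slope_def intro!: divide_nonneg_nonneg mult_nonneg_nonneg)
  moreover have "level_slope \<nu> j > 0"
    using assms by (auto simp: level_slope_def)
  ultimately have "A > 0" unfolding A_def by (metis UNIV_I finite sum_pos2)
  have "(\<Sum>i\<in>UNIV. consumer_level \<nu> \<rho> S i) = S \<longleftrightarrow> S = B / A" for S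
  proof -
    have "(\<Sum>i\<in>UNIV. consumer_level \<nu> \<rho> S i) = S \<longleftrightarrow> B - S * A = 0"
      by (simp add: sum_consumer_level A_def B_def)
    also have "\<dots> \<longleftrightarrow> S = B / A"
      using \<open>A > 0\<close> by (auto simp: eq_divide_eq)
    finally show ?thesis .
  qed
  then have "\<exists>!S. (\<Sum>i\<in>UNIV. consumer_level \<nu> \<rho> S i) = S" by simp
  then have "\<exists>!y. y = consumer_level \<nu> \<rho> (sum y UNIV)"
    by (intro ex1_fixed_point_of_sum) (simp add: fun_eq_iff)
  moreover have "hyperplane_equilibrium \<nu> \<rho> y \<longleftrightarrow> y = consumer_level \<nu> \<rho> (sum y UNIV)" for y
  proof -
    have "hyperplane_residual \<nu> \<rho> (sum y UNIV) (y i) i = 0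
        \<longleftrightarrow> y i = consumer_level \<nu> \<rho> (sum y UNIV) i" for i
      using assms(2)[rule_format, of i] by (intro hyperplane_residual_eq_0_iff_level) auto
    then show ?thesis unfolding hyperplane_equilibrium_def fun_eq_iff by blast
  qed
  ultimately show ?thesis by simp
qed

lemma ex1_hyperplane_equilibrium_one_unweighted:
  fixes \<nu> \<rho> :: "'n::finite \<Rightarrow> real"
  assumes "CARD('n) \<ge> 2" and "\<nu> k = 0" and "\<forall>i. i \<noteq> k \<longrightarrow> \<nu> i \<noteq> 0"
  shows "\<exists>!y. hyperplane_equilibrium \<nu> \<rho> y"
proof -
  have equilibrium_iff: "hyperplane_equilibrium \<nu> \<rho> y \<longleftrightarrow>
      sum y UNIV = 1 - \<rho> k \<and> (\<forall>i. i \<noteq> k \<longrightarrow> y i = consumer_level \<nu> \<rho> (1 - \<rho> k) i)" for y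
  proof -
    define S where "S = sum y UNIV"
    have "hyperplane_equilibrium \<nu> \<rho> y \<longleftrightarrow> hyperplane_residual \<nu> \<rho> S (y k) k = 0
        \<and> (\<forall>i. i \<noteq> k \<longrightarrow> hyperplane_residual \<nu> \<rho> S (y i) i = 0)"
      unfolding hyperplane_equilibrium_def S_def by auto
    also have "\<dots> \<longleftrightarrow> S = 1 - \<rho> k \<and> (\<forall>i. i \<noteq> k \<longrightarrow> y i = consumer_level \<nu> \<rho> S i)"
      using assms hyperplane_residual_eq_0_iff_level[of \<nu>]
        hyperplane_residual_eq_0_iff_unweighted[of \<nu> k] by auto
    finally show ?thesis unfolding S_def by auto
  qed
  show ?thesis unfolding equilibrium_iff by (rule ex1_fun_with_sum_and_values_off)
qed

lemma not_ex1_hyperplane_equilibrium_two_unweighted: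
  fixes \<nu> \<rho> :: "'n::finite \<Rightarrow> real"
  assumes "\<nu> i = 0" and "\<nu> k = 0" and "i \<noteq> k"
  shows "\<not> (\<exists>!y. hyperplane_equilibrium \<nu> \<rho> y)"
proof
  assume "\<exists>!y. hyperplane_equilibrium \<nu> \<rho> y"
  then obtain y where y: "hyperplane_equilibrium \<nu> \<rho> y"
    and uniq: "\<And>z. hyperplane_equilibrium \<nu> \<rho> z \<Longrightarrow> z = y" by blast
  define z where "z = (\<lambda>j. y j + (if j = i then 1 else 0) - (if j = k then 1 else (0::real)))"
  have sum_z: "sum z UNIV = sum y UNIV"
    by (simp add: z_def sum.distrib sum_subtractf)
  have "hyperplane_residual \<nu> \<rho> S (z j) j = hyperplane_residual \<nu> \<rho> S (y j) j" for S j
    using assms by (cases "j = i \<or> j = k") (auto simp: z_def hyperplane_residual_def)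
  then have "hyperplane_equilibrium \<nu> \<rho> z"
    using y unfolding hyperplane_equilibrium_def sum_z by simp
  moreover have "z \<noteq> y" using assms(3) by (auto simp: z_def fun_eq_iff)
  ultimately show False using uniq by blast
qed

lemma ex1_hyperplane_equilibrium_iff:
  fixes \<nu> \<rho> :: "'n::finite \<Rightarrow> real"
  assumes "CARD('n) \<ge> 2" and "\<forall>i. \<nu> i \<in> {0..1}" and "\<not> (\<forall>i. \<nu> i = 1)"
  shows "(\<exists>!y. hyperplane_equilibrium \<nu> \<rho> y) \<longleftrightarrow> card {i. \<nu> i = 0} \<le> 1"
proof
  assume "\<exists>!y. hyperplane_equilibrium \<nu> \<rho> y"
  then have "\<forall>i\<in>{i. \<nu> i = 0}. \<forall>k\<in>{i. \<nu> i = 0}. i = k"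
    using not_ex1_hyperplane_equilibrium_two_unweighted by blast
  then show "card {i. \<nu> i = 0} \<le> 1"
    using card_le_Suc0_iff_eq[of "{i. \<nu> i = 0}"] by simp
next
  assume "card {i. \<nu> i = 0} \<le> 1"
  then have "\<forall>i k. \<nu> i = 0 \<longrightarrow> \<nu> k = 0 \<longrightarrow> i = k"
    using card_le_Suc0_iff_eq[of "{i. \<nu> i = 0}"] by simp
  then consider "\<forall>i. \<nu> i \<noteq> 0" | k where "\<nu> k = 0" "\<forall>i. i \<noteq> k \<longrightarrow> \<nu> i \<noteq> 0"
    by blast
  then show "\<exists>!y. hyperplane_equilibrium \<nu> \<rho> y"
  proof cases
    case 1
    have "\<forall>i. \<nu> i \<in> {0<..1}"
      using 1 assms(2) by (auto intro: order.not_eq_order_implies_strict)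
    moreover obtain j where "\<nu> j \<noteq> 1" using assms(3) by blast
    ultimately show ?thesis
      using assms(2) ex1_hyperplane_equilibrium_all_weighted[OF assms(1)]
      by (metis atLeastAtMost_iff order_le_neq_trans)
  next
    case 2
    then show ?thesis by (rule ex1_hyperplane_equilibrium_one_unweighted[OF assms(1)])
  qed
qed

theorem lemma10p4:
  fixes \<beta> \<nu> \<rho> :: "'n::finite \<Rightarrow> real"
  assumes "CARD('n) \<ge> 2"
    and "\<forall>i. \<beta> i > 0"
    and "\<forall>i. \<nu> i \<in> {0..1}"
    and "\<forall>i. \<rho> i \<in> {0..1}"
    and "\<not> (\<forall>i. \<nu> i = 1)"
    and "\<not> (\<forall>i. \<nu> i = 0)"
    and "\<not> (\<forall>i. \<rho> i = 1)"
    and "\<not> (\<forall>i. \<rho> i = 0)"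
  shows "(\<exists>!p :: real \<times> ('n \<Rightarrow> real).
             rc_equilibrium \<beta> \<nu> \<rho> (fst p) (snd p) \<and> fst p = 1 - (\<Sum>i\<in>UNIV. snd p i))
         \<longleftrightarrow> card {i. \<nu> i = 0} \<le> 1"
proof -
  have "\<forall>i. \<beta> i \<noteq> 0" using assms(2) by (metis less_irrefl)
  then show ?thesis
    by (simp add: ex1_rc_equilibrium_on_hyperplane_iff[OF assms(1)]
        ex1_hyperplane_equilibrium_iff[OF assms(1,3,5)])
qed

end
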